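(* Let $\mathcal{L}$ and $\mathcal{K}$ be two linkages in a directed graph $G$ and let $k \ge 1$, $\alpha,\beta \ge 1$ be integers. Let $U_1,\ldots,U_k$ be walks in $G$ such that the family $(U_i)_{i=1}^k$ has congestion $\alpha$, and for each $i$ let $\mathcal{U}_i$ be the family of paths of $\mathcal{L}$ that are subpaths of $U_i$. Similarly, let $W_1,\ldots,W_k$ be walks in $G$ such that $(W_i)_{i=1}^k$ has congestion $\beta$, and let $\mathcal{W}_i$ be the family of paths of $\mathcal{K}$ that are subpaths of $W_i$. If for every $1 \le i \leq k$ the subgraph of the intersection graph $I(\mathcal{L},\mathcal{K})$ induced by $\mathcal{U}_i\cup\mathcal{W}_i$ has average degree at least $2$, then $G$ contains a family of $k$ directed cycles of congestion $\alpha +\beta$.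
   Context: For $A,B\subseteq V(G)$ with $|A|=|B|$, a linkage from $A$ to $B$ is a set of $|A|$ pairwise vertex-disjoint directed paths each starting in $A$ and ending in $B$. A family of walks/cycles is of congestion $c$ if every vertex is visited at most $c$ times in total (each visit counted separately). The intersection graph $I(\mathcal{L},\mathcal{K})$ is the bipartite graph on $\mathcal{L}\cup\mathcal{K}$ in which $L\in\mathcal{L}$ and $K\in\mathcal{K}$ are adjacent iff they share a vertex. *)

theory Defs
  imports Complex_Main "HOL-Library.Sublist"
begin

definition digraph :: "'a set \<Rightarrow> ('a \<times> 'a) set \<Rightarrow> bool" where
  "digraph V E \<longleftrightarrow> finite V \<and> E \<subseteq> V \<times> V"

definition is_walk :: "'a set \<Rightarrow> ('a \<times> 'a) set \<Rightarrow> 'a list \<Rightarrow> bool" where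
  "is_walk V E W \<longleftrightarrow> W \<noteq> [] \<and> set W \<subseteq> V \<and>
     (\<forall>i. Suc i < length W \<longrightarrow> (W ! i, W ! Suc i) \<in> E)"

definition is_path :: "'a set \<Rightarrow> ('a \<times> 'a) set \<Rightarrow> 'a list \<Rightarrow> bool" where
  "is_path V E P \<longleftrightarrow> is_walk V E P \<and> distinct P"

definition is_cycle :: "'a set \<Rightarrow> ('a \<times> 'a) set \<Rightarrow> 'a list \<Rightarrow> bool" where
  "is_cycle V E C \<longleftrightarrow> is_path V E C \<and> (last C, hd C) \<in> E"

definition linkage_from_to ::
  "'a set \<Rightarrow> ('a \<times> 'a) set \<Rightarrow> 'a set \<Rightarrow> 'a set \<Rightarrow> 'a list set \<Rightarrow> bool" where
  "linkage_from_to V E A B L \<longleftrightarrow> A \<subseteq> V \<and> B \<subseteq> V \<and> card A = card B \<and>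
     finite L \<and> card L = card A \<and>
     (\<forall>P\<in>L. is_path V E P \<and> hd P \<in> A \<and> last P \<in> B) \<and>
     (\<forall>P\<in>L. \<forall>Q\<in>L. P \<noteq> Q \<longrightarrow> set P \<inter> set Q = {})"

definition linkage :: "'a set \<Rightarrow> ('a \<times> 'a) set \<Rightarrow> 'a list set \<Rightarrow> bool" where
  "linkage V E L \<longleftrightarrow> (\<exists>A B. linkage_from_to V E A B L)"

definition has_congestion :: "nat \<Rightarrow> (nat \<Rightarrow> 'a list) \<Rightarrow> nat \<Rightarrow> bool" where
  "has_congestion k W c \<longleftrightarrow> (\<forall>v. (\<Sum>i<k. count_list (W i) v) \<le> c)"

text \<open>The intersection graph I(L,K): bipartite graph on the disjoint union of L and K
  (tagged with Inl / Inr), edges {P,Q} for P \<in> L, Q \<in> K sharing a vertex.\<close>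
definition intersection_graph_edges ::
  "'a list set \<Rightarrow> 'a list set \<Rightarrow> ('a list + 'a list) set set" where
  "intersection_graph_edges L K =
     {{Inl P, Inr Q} | P Q. P \<in> L \<and> Q \<in> K \<and> set P \<inter> set Q \<noteq> {}}"

definition induced_edges :: "'v set set \<Rightarrow> 'v set \<Rightarrow> 'v set set" where
  "induced_edges Ed S = {e \<in> Ed. e \<subseteq> S}"

definition degree_in :: "'v set set \<Rightarrow> 'v \<Rightarrow> nat" where
  "degree_in Ed v = card {e \<in> Ed. v \<in> e}"

definition average_degree :: "'v set \<Rightarrow> 'v set set \<Rightarrow> real" where
  "average_degree S Ed = (\<Sum>v\<in>S. real (degree_in Ed v)) / real (card S)"

end

theory Submission
  imports Defs "HOL-Library.Disjoint_Sets"
begin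

text \<open>Fix i and write u, w for the walks U i, W i. It suffices to find a cycle with all its vertices
  on u or w: a cycle visits each vertex at most once, so these cycles have congestion
  \<alpha> + \<beta>. If u or w repeats a vertex, it contains a cycle. If two common vertices
  of u and w occur in opposite orders on them, a segment of u followed by a segment of w is a closed
  walk, which again contains a cycle. Otherwise u and w are paths traversing their common vertices
  in the same order, so every path of L on u and every path of K on w meets them in an interval
  of this order. The intersection graph of two families of disjoint intervals has fewer edges
  than vertices: charging each edge to an endpoint whose maximum lies in the other endpoint is
  injective, and an interval containing the overall maximum (one from K if possible) is never
  charged. This contradicts average degree at least 2.\<close>

lemma successively_iff_nth:
  "successively P xs \<longleftrightarrow> (\<forall>i. Suc i < length xs \<longrightarrow> P (xs ! i) (xs ! Suc i))"
proof (induction P xs rule: successively.induct)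
  case (3 P x y xs)
  then show ?case
    by (auto simp: less_Suc_eq_0_disj)
qed auto

lemma is_walk_iff_successively:
  "is_walk V E xs \<longleftrightarrow> xs \<noteq> [] \<and> set xs \<subseteq> V \<and> successively (\<lambda>x y. (x, y) \<in> E) xs"
  by (simp add: is_walk_def successively_iff_nth)

lemma is_walk_sublist:
  assumes "is_walk V E xs" "sublist ys xs" "ys \<noteq> []"
  shows "is_walk V E ys"
proof -
  obtain a b where "xs = a @ ys @ b"
    using assms(2) by (auto simp: sublist_def)
  then show ?thesis
    using assms by (auto simp: is_walk_iff_successively successively_append_iff)
qed

lemma is_walk_join:
  assumes "is_walk V E (xs @ [y])" "is_walk V E (y # ys)"
  shows "is_walk V E (xs @ y # ys)"
  using assms by (auto simp: is_walk_iff_successively successively_append_iff successively_Cons)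

lemma is_walk_snoc:
  "xs \<noteq> [] \<Longrightarrow> is_walk V E (xs @ [y]) \<longleftrightarrow> is_walk V E xs \<and> y \<in> V \<and> (last xs, y) \<in> E"
  by (auto simp: is_walk_iff_successively successively_append_iff)

lemma sublist_nth_segment:
  assumes "i < j" "j < length xs"
  shows "\<exists>ys. sublist (xs ! i # ys @ [xs ! j]) xs"
proof -
  have "drop i (take (Suc j) xs) = xs ! i # drop (Suc i) (take j xs) @ [xs ! j]"
    using assms by (simp add: take_Suc_conv_app_nth Cons_nth_drop_Suc[of i "take j xs", symmetric])
  moreover have "sublist (drop i (take (Suc j) xs)) xs"
    by (meson sublist_drop sublist_take sublist_order.order_trans)
  ultimately show ?thesis by metis
qed

lemma walk_not_distinct_contains_cycle:
  assumes "is_walk V E c" "\<not> distinct c"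
  shows "\<exists>C. is_cycle V E C \<and> set C \<subseteq> set c"
  using assms
proof (induction "length c" arbitrary: c rule: less_induct)
  case less
  obtain a b d y where c: "c = a @ [y] @ b @ [y] @ d"
    using not_distinct_decomp[OF less.prems(2)] by blast
  have "c = a @ ((y # b) @ [y]) @ d"
    by (simp add: c)
  then have "is_walk V E ((y # b) @ [y])"
    using less.prems(1) is_walk_sublist sublist_appendI by blast
  then have walk: "is_walk V E (y # b)" and closing: "(last (y # b), hd (y # b)) \<in> E"
    using is_walk_snoc[of "y # b" V E y] by auto
  have shorter: "length (y # b) < length c" and sub: "set (y # b) \<subseteq> set c"
    by (auto simp: c)
  show ?case
  proof (cases "distinct (y # b)")
    case True
    then show ?thesis
      using walk closing sub unfolding is_cycle_def is_path_def by blast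
  next
    case False
    then show ?thesis
      using less.hyps[OF shorter walk] sub by blast
  qed
qed

lemma crossing_walks_contain_cycle:
  assumes u: "is_walk V E u" and w: "is_walk V E w"
    and "i < j" "j < length u" "j' < i'" "i' < length w"
    and "u ! i = w ! i'" "u ! j = w ! j'"
  shows "\<exists>C. is_cycle V E C \<and> set C \<subseteq> set u \<union> set w"
proof -
  obtain p where p: "sublist (u ! i # p @ [u ! j]) u"
    using sublist_nth_segment assms by blast
  obtain q where q: "sublist (u ! j # q @ [u ! i]) w"
    using sublist_nth_segment[of j' i' w] assms by auto
  have "is_walk V E ((u ! i # p) @ [u ! j])" "is_walk V E (u ! j # q @ [u ! i])"
    using is_walk_sublist[OF u p] is_walk_sublist[OF w q] by simp_all
  then have "is_walk V E (u ! i # p @ u ! j # q @ [u ! i])"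
    using is_walk_join by fastforce
  moreover have "\<not> distinct (u ! i # p @ u ! j # q @ [u ! i])"
    by simp
  moreover have "set (u ! i # p @ u ! j # q @ [u ! i]) \<subseteq> set u \<union> set w"
    using set_mono_sublist[OF p] set_mono_sublist[OF q] by auto
  ultimately show ?thesis
    using walk_not_distinct_contains_cycle by blast
qed

definition positions :: "'a list \<Rightarrow> 'a set \<Rightarrow> nat set" where
  "positions xs A = {i. i < length xs \<and> xs ! i \<in> A}"

lemma positions_Int: "positions xs (A \<inter> B) = positions xs A \<inter> positions xs B"
  by (auto simp: positions_def)

lemma positions_eq_empty_iff: "positions xs A = {} \<longleftrightarrow> set xs \<inter> A = {}"
  by (fastforce simp: positions_def in_set_conv_nth)

lemma finite_positions [simp]: "finite (positions xs A)"
  by (simp add: positions_def)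

lemma positions_sublist:
  assumes "distinct (a @ ys @ b)"
  shows "positions (a @ ys @ b) (set ys) = {length a..<length a + length ys}"
proof -
  have "(a @ ys @ b) ! i \<in> set ys \<longleftrightarrow> length a \<le> i \<and> i < length a + length ys"
    if "i < length (a @ ys @ b)" for i
    using that assms by (auto simp: nth_append dest: nth_mem)
  then show ?thesis
    by (auto simp: positions_def)
qed

definition convex_within :: "'b::order set \<Rightarrow> 'b set \<Rightarrow> bool" where
  "convex_within Y A \<longleftrightarrow> (\<forall>x\<in>A. \<forall>z\<in>A. \<forall>y\<in>Y. x \<le> y \<longrightarrow> y \<le> z \<longrightarrow> y \<in> A)"

lemma convex_within_meet_Max:
  fixes A B :: "'b::linorder set"
  assumes "finite A" "finite B" "A \<subseteq> Y" "B \<subseteq> Y" "convex_within Y A" "convex_within Y B"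
    and "A \<inter> B \<noteq> {}"
  shows "Max A \<in> B \<or> Max B \<in> A"
proof -
  obtain x where x: "x \<in> A" "x \<in> B"
    using assms(7) by blast
  then have "Max A \<in> A" "Max B \<in> B" "x \<le> Max A" "x \<le> Max B"
    using assms(1,2) by (auto intro: Max_in)
  then show ?thesis
    using assms(3-6) x unfolding convex_within_def by (meson linear subsetD)
qed

definition edge_owner :: "('i \<Rightarrow> 'b::linorder set) \<Rightarrow> ('j \<Rightarrow> 'b set) \<Rightarrow> 'i \<times> 'j \<Rightarrow> 'i + 'j" where
  "edge_owner A B = (\<lambda>(i, j). if Max (A i) \<in> B j then Inl i else Inr j)"

lemma inj_on_edge_owner:
  assumes disj: "disjoint_family_on A I" "disjoint_family_on B J"
    and meet: "\<And>i j. i \<in> I \<Longrightarrow> j \<in> J \<Longrightarrow> A i \<inter> B j \<noteq> {} \<Longrightarrow> Max (A i) \<in> B j \<or> Max (B j) \<in> A i"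
  shows "inj_on (edge_owner A B) {(i, j) \<in> I \<times> J. A i \<inter> B j \<noteq> {}}"
proof (rule inj_onI, clarify)
  fix i j i' j'
  assume ij: "i \<in> I" "j \<in> J" "A i \<inter> B j \<noteq> {}" and ij': "i' \<in> I" "j' \<in> J" "A i' \<inter> B j' \<noteq> {}"
    and eq: "edge_owner A B (i, j) = edge_owner A B (i', j')"
  show "i = i' \<and> j = j'"
  proof (cases "Max (A i) \<in> B j")
    case True
    with eq have "i' = i" "Max (A i) \<in> B j'"
      by (auto simp: edge_owner_def split: if_splits)
    with True ij ij' disj(2) show ?thesis
      by (auto dest: disjoint_family_onD)
  next
    case False
    with eq have "j' = j" "Max (A i') \<notin> B j"
      by (auto simp: edge_owner_def split: if_splits)
    with False have "Max (B j) \<in> A i" "Max (B j) \<in> A i'"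
      using meet[OF ij] meet[OF ij'] by auto
    with \<open>j' = j\<close> ij ij' disj(1) show ?thesis
      by (auto dest: disjoint_family_onD)
  qed
qed

lemma exists_not_edge_owner:
  assumes fin: "finite I" "finite J" "\<forall>i\<in>I. finite (A i)" "\<forall>j\<in>J. finite (B j)"
    and meet: "\<And>i j. i \<in> I \<Longrightarrow> j \<in> J \<Longrightarrow> A i \<inter> B j \<noteq> {} \<Longrightarrow> Max (A i) \<in> B j \<or> Max (B j) \<in> A i"
    and nonempty: "\<Union>(A ` I) \<union> \<Union>(B ` J) \<noteq> {}"
  shows "\<exists>s \<in> I <+> J. s \<notin> edge_owner A B ` {(i, j) \<in> I \<times> J. A i \<inter> B j \<noteq> {}}"
proof -
  define M where "M = Max (\<Union>(A ` I) \<union> \<Union>(B ` J))"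
  have M_in: "M \<in> \<Union>(A ` I) \<union> \<Union>(B ` J)"
    using fin nonempty unfolding M_def by (intro Max_in) auto
  have Max_eq_M: "Max S = M" if S: "S \<in> A ` I \<union> B ` J" "M \<in> S" for S
  proof (rule Max_eqI)
    show "finite S"
      using S(1) fin by auto
    show "y \<le> M" if "y \<in> S" for y
      using S(1) that fin unfolding M_def by (intro Max_ge) auto
  qed (fact S(2))
  consider (in_B) j where "j \<in> J" "M \<in> B j" | (only_in_A) i where "i \<in> I" "M \<in> A i" "\<forall>j\<in>J. M \<notin> B j"
    using M_in by blast
  then show ?thesis
  proof cases
    case in_B
    have "edge_owner A B (i', j') \<noteq> Inr j" if "i' \<in> I" "j' \<in> J" "A i' \<inter> B j' \<noteq> {}" for i' j'
    proof
      assume "edge_owner A B (i', j') = Inr j"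
      then have "j' = j" and not_in: "Max (A i') \<notin> B j"
        by (auto simp: edge_owner_def split: if_splits)
      moreover have "Max (B j) = M"
        using Max_eq_M in_B by blast
      ultimately have "Max (A i') = M"
        using meet[OF that] Max_eq_M that(1) by auto
      then show False
        using not_in in_B by simp
    qed
    then show ?thesis
      using in_B by (force intro!: bexI[of _ "Inr j"])
  next
    case only_in_A
    have "edge_owner A B (i', j') \<noteq> Inl i" if "i' \<in> I" "j' \<in> J" "A i' \<inter> B j' \<noteq> {}" for i' j'
    proof
      assume "edge_owner A B (i', j') = Inl i"
      then have "i' = i" "Max (A i) \<in> B j'"
        by (auto simp: edge_owner_def split: if_splits)
      moreover have "Max (A i) = M"
        using Max_eq_M only_in_A by blast
      ultimately show False
        using only_in_A that(2) by simp
    qed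
    then show ?thesis
      using only_in_A by (force intro!: bexI[of _ "Inl i"])
  qed
qed

lemma card_meeting_pairs_less:
  assumes fin: "finite I" "finite J" "\<forall>i\<in>I. finite (A i)" "\<forall>j\<in>J. finite (B j)"
    and disj: "disjoint_family_on A I" "disjoint_family_on B J"
    and meet: "\<And>i j. i \<in> I \<Longrightarrow> j \<in> J \<Longrightarrow> A i \<inter> B j \<noteq> {} \<Longrightarrow> Max (A i) \<in> B j \<or> Max (B j) \<in> A i"
    and nonempty: "I <+> J \<noteq> {}"
  shows "card {(i, j) \<in> I \<times> J. A i \<inter> B j \<noteq> {}} < card (I <+> J)"
proof (cases "{(i, j) \<in> I \<times> J. A i \<inter> B j \<noteq> {}} = {}")
  case True
  show ?thesis
    unfolding True using fin nonempty by (simp add: card_gt_0_iff)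
next
  case False
  let ?R = "{(i, j) \<in> I \<times> J. A i \<inter> B j \<noteq> {}}"
  obtain s where s: "s \<in> I <+> J" "s \<notin> edge_owner A B ` ?R"
    using exists_not_edge_owner[OF fin meet] False by blast
  have "edge_owner A B ` ?R \<subseteq> (I <+> J) - {s}"
    using s(2) by (auto simp: edge_owner_def split: if_splits)
  then have "card (edge_owner A B ` ?R) < card (I <+> J)"
    using s fin by (meson card_Diff1_less finite_Plus card_mono finite_Diff le_less_trans)
  then show ?thesis
    using inj_on_edge_owner[OF disj meet] by (simp add: card_image)
qed

lemma convex_within_positions_sublist:
  assumes "distinct u" "sublist P u"
  shows "convex_within (positions u X) (positions u (set P \<inter> X))"
proof -
  obtain a b where u: "u = a @ P @ b"
    using assms(2) by (auto simp: sublist_def)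
  show ?thesis
    using positions_sublist[of a P b] assms(1)
    unfolding u positions_Int convex_within_def by auto
qed

definition in_same_order :: "'a list \<Rightarrow> 'a list \<Rightarrow> bool" where
  "in_same_order u w \<longleftrightarrow> (\<forall>i j i' j'. i \<le> j \<longrightarrow> j < length u \<longrightarrow> i' < length w \<longrightarrow> j' < length w \<longrightarrow>
     u ! i = w ! i' \<longrightarrow> u ! j = w ! j' \<longrightarrow> i' \<le> j')"

lemma in_same_orderD:
  "in_same_order u w \<Longrightarrow> i \<le> j \<Longrightarrow> j < length u \<Longrightarrow> i' < length w \<Longrightarrow> j' < length w \<Longrightarrow>
    u ! i = w ! i' \<Longrightarrow> u ! j = w ! j' \<Longrightarrow> i' \<le> j'"
  unfolding in_same_order_def by blast

lemma walks_contain_cycle_unless_in_same_order: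
  assumes "is_walk V E u" "is_walk V E w" "distinct w" "\<not> in_same_order u w"
  shows "\<exists>C. is_cycle V E C \<and> set C \<subseteq> set u \<union> set w"
proof -
  obtain i j i' j' where ij: "i \<le> j" "j < length u" "i' < length w" "j' < length w"
    and eq: "u ! i = w ! i'" "u ! j = w ! j'" and "j' < i'"
    using assms(4) unfolding in_same_order_def by (auto simp: not_le)
  moreover have "i \<noteq> j"
    using ij eq \<open>j' < i'\<close> assms(3) by (auto simp: nth_eq_iff_index_eq)
  ultimately show ?thesis
    using crossing_walks_contain_cycle[OF assms(1,2)] by (meson le_neq_implies_less)
qed

lemma convex_within_positions_in_same_order:
  assumes "distinct w" "sublist Q w" "in_same_order u w"
  shows "convex_within (positions u (set w)) (positions u (set Q))"
  unfolding convex_within_def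
proof (intro ballI impI)
  fix x z y
  assume x: "x \<in> positions u (set Q)" and z: "z \<in> positions u (set Q)"
    and y: "y \<in> positions u (set w)" and "x \<le> y" "y \<le> z"
  have "set Q \<subseteq> set w"
    using assms(2) by (rule set_mono_sublist)
  then have "u ! x \<in> set w" "u ! z \<in> set w"
    using x z by (auto simp: positions_def)
  then obtain x' y' z' where x': "x' < length w" "u ! x = w ! x'"
    and y': "y' < length w" "u ! y = w ! y'" and z': "z' < length w" "u ! z = w ! z'"
    using y by (auto simp: positions_def in_set_conv_nth)
  have "x' \<le> y'" "y' \<le> z'"
    using in_same_orderD[OF assms(3)] x' y' z' x y z \<open>x \<le> y\<close> \<open>y \<le> z\<close>
    by (auto simp: positions_def)
  moreover have "convex_within (positions w UNIV) (positions w (set Q))"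
    using convex_within_positions_sublist[OF assms(1,2), of UNIV] by simp
  moreover have "x' \<in> positions w (set Q)" "z' \<in> positions w (set Q)" "y' \<in> positions w UNIV"
    using x x' z z' y' by (auto simp: positions_def)
  ultimately have "y' \<in> positions w (set Q)"
    unfolding convex_within_def by blast
  then show "y \<in> positions u (set Q)"
    using y y' by (auto simp: positions_def)
qed

lemma card_meeting_subpaths_less:
  assumes distinct: "distinct u" "distinct w" and same_order: "in_same_order u w"
    and sub: "\<forall>P\<in>\<U>. sublist P u" "\<forall>Q\<in>\<W>. sublist Q w"
    and fin: "finite \<U>" "finite \<W>"
    and disj: "disjoint_family_on set \<U>" "disjoint_family_on set \<W>"
    and nonempty: "\<U> <+> \<W> \<noteq> {}"
  shows "card {(P, Q) \<in> \<U> \<times> \<W>. set P \<inter> set Q \<noteq> {}} < card (\<U> <+> \<W>)"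
proof -
  (* Both families become intervals of common vertices, indexed by their positions on u. *)
  define A where "A P = positions u (set P \<inter> set w)" for P
  define B where "B Q = positions u (set Q)" for Q
  have meet_iff: "A P \<inter> B Q \<noteq> {} \<longleftrightarrow> set P \<inter> set Q \<noteq> {}" if "P \<in> \<U>" "Q \<in> \<W>" for P Q
    using that sub set_mono_sublist[of P u] set_mono_sublist[of Q w]
    unfolding A_def B_def positions_Int[symmetric] positions_eq_empty_iff by blast
  have "card {(P, Q) \<in> \<U> \<times> \<W>. A P \<inter> B Q \<noteq> {}} < card (\<U> <+> \<W>)"
  proof (rule card_meeting_pairs_less)
    fix P Q
    assume "P \<in> \<U>" "Q \<in> \<W>" "A P \<inter> B Q \<noteq> {}"
    moreover have "A P \<subseteq> positions u (set w)" "B Q \<subseteq> positions u (set w)"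
      using \<open>Q \<in> \<W>\<close> sub(2) by (auto simp: A_def B_def positions_def dest: set_mono_sublist)
    ultimately show "Max (A P) \<in> B Q \<or> Max (B Q) \<in> A P"
      using sub convex_within_positions_sublist[OF distinct(1)]
        convex_within_positions_in_same_order[OF distinct(2) _ same_order]
      by (intro convex_within_meet_Max) (auto simp: A_def B_def)
  next
    show "disjoint_family_on A \<U>"
      using disj(1) by (rule disjoint_family_on_bisimulation) (auto simp: A_def positions_def)
    show "disjoint_family_on B \<W>"
      using disj(2) by (rule disjoint_family_on_bisimulation) (auto simp: B_def positions_def)
  qed (use fin nonempty in \<open>auto simp: A_def B_def\<close>)
  moreover have "{(P, Q) \<in> \<U> \<times> \<W>. A P \<inter> B Q \<noteq> {}} = {(P, Q) \<in> \<U> \<times> \<W>. set P \<inter> set Q \<noteq> {}}"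
    using meet_iff by blast
  ultimately show ?thesis
    by simp
qed

lemma handshake:
  assumes "finite S" "\<forall>e\<in>Ed. e \<subseteq> S \<and> card e = 2"
  shows "(\<Sum>v\<in>S. degree_in Ed v) = 2 * card Ed"
proof -
  have "finite Ed"
    using assms by (meson PowI finite_Pow_iff finite_subset subsetI)
  have "(\<Sum>v\<in>S. degree_in Ed v) = (\<Sum>v\<in>S. \<Sum>e\<in>Ed. of_bool (v \<in> e))"
    using \<open>finite Ed\<close> by (simp add: degree_in_def Int_def)
  also have "\<dots> = (\<Sum>e\<in>Ed. \<Sum>v\<in>S. of_bool (v \<in> e))"
    by (rule sum.swap)
  also have "\<dots> = (\<Sum>e\<in>Ed. card e)"
    using assms by (intro sum.cong) (auto simp: Int_absorb1 Int_absorb2)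
  also have "\<dots> = 2 * card Ed"
    using assms by simp
  finally show ?thesis .
qed

lemma two_le_average_degree_iff:
  assumes "finite S" "\<forall>e\<in>Ed. e \<subseteq> S \<and> card e = 2"
  shows "2 \<le> average_degree S Ed \<longleftrightarrow> S \<noteq> {} \<and> card S \<le> card Ed"
proof -
  have avg: "average_degree S Ed = 2 * real (card Ed) / real (card S)"
    using handshake[OF assms] unfolding average_degree_def by (metis of_nat_mult of_nat_numeral of_nat_sum)
  show ?thesis
  proof (cases "S = {}")
    case False
    then have "real (card S) > 0"
      using assms(1) by (simp add: card_gt_0_iff)
    with False show ?thesis
      using avg by (simp add: le_divide_eq)
  qed (use avg in simp)
qed

lemma induced_intersection_graph_edges:
  assumes "\<U> \<subseteq> L" "\<W> \<subseteq> K"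
  shows "induced_edges (intersection_graph_edges L K) (\<U> <+> \<W>)
    = (\<lambda>(P, Q). {Inl P, Inr Q}) ` {(P, Q) \<in> \<U> \<times> \<W>. set P \<inter> set Q \<noteq> {}}"
  using assms by (auto simp: induced_edges_def intersection_graph_edges_def)

lemma two_le_average_degree_intersection_graph_iff:
  assumes "finite \<U>" "finite \<W>" "\<U> \<subseteq> L" "\<W> \<subseteq> K"
  shows "2 \<le> average_degree (\<U> <+> \<W>) (induced_edges (intersection_graph_edges L K) (\<U> <+> \<W>))
    \<longleftrightarrow> \<U> <+> \<W> \<noteq> {} \<and> card (\<U> <+> \<W>) \<le> card {(P, Q) \<in> \<U> \<times> \<W>. set P \<inter> set Q \<noteq> {}}"
proof -
  let ?edge = "\<lambda>(P, Q). {Inl P, Inr Q} :: ('a list + 'a list) set"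
  have "inj ?edge"
    by (auto simp: inj_def doubleton_eq_iff)
  then show ?thesis
    using assms
    by (subst two_le_average_degree_iff)
       (auto simp: induced_intersection_graph_edges card_image inj_on_subset)
qed

lemma linkage_finite_disjoint:
  "linkage V E L \<Longrightarrow> finite L \<and> disjoint_family_on set L"
  by (auto simp: linkage_def linkage_from_to_def disjoint_family_on_def)

lemma cycle_in_walks_if_average_degree_ge_2:
  assumes L: "linkage V E L" and K: "linkage V E K"
    and u: "is_walk V E u" and w: "is_walk V E w"
    and avg: "average_degree (Inl ` {P \<in> L. sublist P u} \<union> Inr ` {Q \<in> K. sublist Q w})
         (induced_edges (intersection_graph_edges L K)
            (Inl ` {P \<in> L. sublist P u} \<union> Inr ` {Q \<in> K. sublist Q w})) \<ge> 2"
  shows "\<exists>C. is_cycle V E C \<and> set C \<subseteq> set u \<union> set w"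
proof (rule ccontr)
  assume no_cycle: "\<nexists>C. is_cycle V E C \<and> set C \<subseteq> set u \<union> set w"
  define \<U> where "\<U> = {P \<in> L. sublist P u}"
  define \<W> where "\<W> = {Q \<in> K. sublist Q w}"
  have distinct: "distinct u" "distinct w"
    using walk_not_distinct_contains_cycle[OF u] walk_not_distinct_contains_cycle[OF w] no_cycle
    by blast+
  have same_order: "in_same_order u w"
    using walks_contain_cycle_unless_in_same_order[OF u w \<open>distinct w\<close>] no_cycle by blast
  have sub: "\<forall>P\<in>\<U>. sublist P u" "\<forall>Q\<in>\<W>. sublist Q w" "\<U> \<subseteq> L" "\<W> \<subseteq> K"
    by (auto simp: \<U>_def \<W>_def)
  have fin: "finite \<U>" "finite \<W>" and disj: "disjoint_family_on set \<U>" "disjoint_family_on set \<W>"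
    using linkage_finite_disjoint[OF L] linkage_finite_disjoint[OF K] sub(3,4)
    by (auto intro: finite_subset disjoint_family_on_mono)
  have "2 \<le> average_degree (\<U> <+> \<W>) (induced_edges (intersection_graph_edges L K) (\<U> <+> \<W>))"
    using avg unfolding \<U>_def[symmetric] \<W>_def[symmetric] Plus_def[symmetric] .
  then have nonempty: "\<U> <+> \<W> \<noteq> {}"
    and many_edges: "card (\<U> <+> \<W>) \<le> card {(P, Q) \<in> \<U> \<times> \<W>. set P \<inter> set Q \<noteq> {}}"
    using two_le_average_degree_intersection_graph_iff[OF fin sub(3,4)] by blast+
  show False
    using card_meeting_subpaths_less[OF distinct same_order sub(1,2) fin disj nonempty] many_edges
    by linarith
qed

lemma count_list_le_1_if_distinct: "distinct xs \<Longrightarrow> count_list xs x \<le> 1"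
  by (induction xs) auto

lemma has_congestion_if_distinct_subsets:
  assumes "\<forall>i<k. distinct (C i) \<and> set (C i) \<subseteq> set (U i) \<union> set (W i)"
    and "has_congestion k U \<alpha>" "has_congestion k W \<beta>"
  shows "has_congestion k C (\<alpha> + \<beta>)"
  unfolding has_congestion_def
proof
  fix v
  have count_le: "count_list (C i) v \<le> count_list (U i) v + count_list (W i) v" if "i < k" for i
  proof (cases "v \<in> set (C i)")
    case True
    then have "1 \<le> count_list (U i) v + count_list (W i) v"
      using assms(1) that count_list_0_iff[of "U i" v] count_list_0_iff[of "W i" v] by auto
    moreover have "distinct (C i)"
      using assms(1) that by blast
    then have "count_list (C i) v \<le> 1"
      by (rule count_list_le_1_if_distinct)
    ultimately show ?thesis
      by linarith
  qed simp
  have "(\<Sum>i<k. count_list (C i) v) \<le> (\<Sum>i<k. count_list (U i) v + count_list (W i) v)"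
    using count_le by (intro sum_mono) simp
  also have "\<dots> = (\<Sum>i<k. count_list (U i) v) + (\<Sum>i<k. count_list (W i) v)"
    by (rule sum.distrib)
  also have "\<dots> \<le> \<alpha> + \<beta>"
    using assms(2,3) unfolding has_congestion_def by (simp add: add_mono)
  finally show "(\<Sum>i<k. count_list (C i) v) \<le> \<alpha> + \<beta>" .
qed

theorem lemma17:
  fixes V :: "'a set" and E :: "('a \<times> 'a) set"
    and L K :: "'a list set" and k \<alpha> \<beta> :: nat
    and U W :: "nat \<Rightarrow> 'a list"
  assumes G: "digraph V E"
    and L: "linkage V E L" and K: "linkage V E K"
    and k: "k \<ge> 1" and \<alpha>: "\<alpha> \<ge> 1" and \<beta>: "\<beta> \<ge> 1"
    and U_walks: "\<forall>i<k. is_walk V E (U i)" and U_cong: "has_congestion k U \<alpha>"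
    and W_walks: "\<forall>i<k. is_walk V E (W i)" and W_cong: "has_congestion k W \<beta>"
    and avg: "\<forall>i<k.
       average_degree (Inl ` {P \<in> L. sublist P (U i)} \<union> Inr ` {Q \<in> K. sublist Q (W i)})
         (induced_edges (intersection_graph_edges L K)
            (Inl ` {P \<in> L. sublist P (U i)} \<union> Inr ` {Q \<in> K. sublist Q (W i)})) \<ge> 2"
  shows "\<exists>C :: nat \<Rightarrow> 'a list. (\<forall>i<k. is_cycle V E (C i)) \<and> has_congestion k C (\<alpha> + \<beta>)"
proof -
  have "\<forall>i<k. \<exists>C. is_cycle V E C \<and> set C \<subseteq> set (U i) \<union> set (W i)"
    using cycle_in_walks_if_average_degree_ge_2[OF L K] U_walks W_walks avg by blast
  then obtain C where C: "\<forall>i<k. is_cycle V E (C i) \<and> set (C i) \<subseteq> set (U i) \<union> set (W i)"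
    unfolding choice_iff' by blast
  then have "\<forall>i<k. distinct (C i) \<and> set (C i) \<subseteq> set (U i) \<union> set (W i)"
    by (simp add: is_cycle_def is_path_def)
  then have "has_congestion k C (\<alpha> + \<beta>)"
    using U_cong W_cong by (rule has_congestion_if_distinct_subsets)
  with C show ?thesis
    by blast
qed

end
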